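(* Let $\{P_t\}_{t\ge0}$ be a stochastically continuous Markov semigroup on $C_b(H)$ with generator $(K,D(K))$, let $\mu\in\mathcal M(H)$ and let $\{\mu_t\}_{t\ge0}$ be a solution of the measure equation $\frac{d}{dt}\int_H\varphi\,d\mu_t=\int_HK\varphi\,d\mu_t$ ($\varphi\in D(K)$), $\mu_0=\mu$. Let $T>0$ and let $u:[0,T]\times H\to\mathbb R$ satisfy: (i) $u\in C_b([0,T]\times H)$; (ii) $u(t,\cdot)\in D(K)$ for every $t\in[0,T]$ and $(t,x)\mapsto Ku(t,x)$ is continuous and bounded on $[0,T]\times H$; (iii) for every $x$ the function $u(\cdot,x)$ is differentiable with derivative $u_t(\cdot,x)$, and $(t,x)\mapsto u_t(t,x)$ is continuous and bounded on $[0,T]\times H$. Then the map $[0,T]\to\mathbb R$, $t\mapsto\int_Hu(t,x)\mu_t(dx)$ is absolutely continuous and for every $t\in[0,T]$ $$\int_Hu(t,x)\mu_t(dx)-\int_Hu(0,x)\mu(dx)=\int_0^t\Big(\int_H\big(u_s(s,x)+Ku(s,x)\big)\mu_s(dx)\Big)ds.$$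
   Context: $H$ is a real separable Hilbert space; $C_b(H)$ is the space of uniformly continuous bounded real functions on $H$ with sup norm $\|\cdot\|_0$; $C_b([0,T]\times H)$ the uniformly continuous bounded real functions on $[0,T]\times H$; $\mathcal M(H)$ the finite Borel measures on $H$ with total variation $\|\cdot\|_{TV}$. Stochastically continuous Markov semigroup: $P_t\varphi(x)=\int_H\varphi(y)\pi_t(x,dy)$ with Borel probability kernels $\pi_t(x,\cdot)$, $(t,x)\mapsto\pi_t(x,\Gamma)$ measurable, $\pi_{t+s}(x,\Gamma)=\int_H\pi_s(y,\Gamma)\pi_t(x,dy)$, $\pi_0(x,\cdot)=\delta_x$, $t\mapsto P_t\varphi(x)$ continuous. Generator: $\varphi\in D(K)$ iff $(P_t\varphi(x)-\varphi(x))/t\to g(x)$ for all $x$ with $g\in C_b(H)$ and $\sup_{t\in(0,1)}\|(P_t\varphi-\varphi)/t\|_0<\infty$; $K\varphi=g$. A solution of the measure equation is a family $\{\mu_t\}_{t\ge0}\subset\mathcal M(H)$ with $\int_0^{T'}\|\mu_t\|_{TV}dt<\infty$ for all $T'>0$, such that for every $\varphi\in D(K)$ the map $t\mapsto\int_H\varphi\,d\mu_t$ is absolutely continuous and $\int_H\varphi\,d\mu_t-\int_H\varphi\,d\mu=\int_0^t\int_HK\varphi\,d\mu_s\,ds$ for all $t\ge0$. *)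

theory Defs
  imports "HOL-Analysis.Analysis" "HOL-Probability.Probability"
begin

text \<open>Real separable Hilbert space: a type of class real_inner, complete_space,
  second_countable_topology (separable for metric spaces).\<close>

definition Cb :: "('a::metric_space \<Rightarrow> real) set" where
  "Cb = {f. uniformly_continuous_on UNIV f \<and> bounded (range f)}"

definition CbT :: "real \<Rightarrow> (real \<Rightarrow> 'a::metric_space \<Rightarrow> real) set" where
  "CbT T = {u. uniformly_continuous_on ({0..T} \<times> UNIV) (\<lambda>(t,x). u t x)
               \<and> bounded ((\<lambda>(t,x). u t x) ` ({0..T} \<times> UNIV))}"

text \<open>Finite signed Borel measures, represented as a difference M1 - M2 of
  two finite (nonnegative) Borel measures.\<close>
type_synonym 'a smeasure = "'a measure \<times> 'a measure"

definition fin_smeasure :: "'a::topological_space smeasure \<Rightarrow> bool" where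
  "fin_smeasure m \<longleftrightarrow> finite_measure (fst m) \<and> finite_measure (snd m)
     \<and> sets (fst m) = sets borel \<and> sets (snd m) = sets borel"

definition smeas :: "'a smeasure \<Rightarrow> 'a set \<Rightarrow> real" where
  "smeas m A = measure (fst m) A - measure (snd m) A"

definition sint :: "'a smeasure \<Rightarrow> ('a \<Rightarrow> real) \<Rightarrow> real" where
  "sint m f = (\<integral>x. f x \<partial>(fst m)) - (\<integral>x. f x \<partial>(snd m))"

definition tv :: "'a::topological_space smeasure \<Rightarrow> real" where
  "tv m = (SUP A \<in> sets borel. smeas m A - smeas m (UNIV - A))"

definition abs_cont_on :: "real \<Rightarrow> real \<Rightarrow> (real \<Rightarrow> real) \<Rightarrow> bool" where
  "abs_cont_on a b f \<longleftrightarrow>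
     (\<forall>\<epsilon>>0. \<exists>\<delta>>0. \<forall>(n::nat) (l::nat \<Rightarrow> real) r.
        (\<forall>i<n. a \<le> l i \<and> l i \<le> r i \<and> r i \<le> b)
        \<and> (\<forall>i<n. \<forall>j<n. i \<noteq> j \<longrightarrow> r i \<le> l j \<or> r j \<le> l i)
        \<and> (\<Sum>i<n. r i - l i) < \<delta>
        \<longrightarrow> (\<Sum>i<n. \<bar>f (r i) - f (l i)\<bar>) < \<epsilon>)"

definition Psg :: "(real \<Rightarrow> 'a \<Rightarrow> 'a measure) \<Rightarrow> real \<Rightarrow> ('a \<Rightarrow> real) \<Rightarrow> 'a \<Rightarrow> real" where
  "Psg \<pi> t \<phi> x = (\<integral>y. \<phi> y \<partial>(\<pi> t x))"

definition sc_markov_semigroup :: "(real \<Rightarrow> 'a::metric_space \<Rightarrow> 'a measure) \<Rightarrow> bool" where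
  "sc_markov_semigroup \<pi> \<longleftrightarrow>
     (\<forall>t\<ge>0. \<forall>x. prob_space (\<pi> t x) \<and> sets (\<pi> t x) = sets borel)
   \<and> (\<forall>\<Gamma>\<in>sets borel. (\<lambda>(t,x). measure (\<pi> t x) \<Gamma>)
          \<in> borel_measurable (restrict_space borel {0..} \<Otimes>\<^sub>M borel))
   \<and> (\<forall>t\<ge>0. \<forall>s\<ge>0. \<forall>x. \<forall>\<Gamma>\<in>sets borel.
          measure (\<pi> (t + s) x) \<Gamma> = (\<integral>y. measure (\<pi> s y) \<Gamma> \<partial>(\<pi> t x)))
   \<and> (\<forall>x. \<pi> 0 x = return borel x)
   \<and> (\<forall>t\<ge>0. \<forall>\<phi>\<in>Cb. Psg \<pi> t \<phi> \<in> Cb)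
   \<and> (\<forall>\<phi>\<in>Cb. \<forall>x. continuous_on {0..} (\<lambda>t. Psg \<pi> t \<phi> x))"

definition DK :: "(real \<Rightarrow> 'a::metric_space \<Rightarrow> 'a measure) \<Rightarrow> ('a \<Rightarrow> real) set" where
  "DK \<pi> = {\<phi>. \<phi> \<in> Cb \<and>
      (\<exists>g\<in>Cb. \<forall>x. ((\<lambda>t. (Psg \<pi> t \<phi> x - \<phi> x) / t) \<longlongrightarrow> g x) (at_right 0))
      \<and> (\<exists>C. \<forall>t\<in>{0<..<1}. \<forall>x. \<bar>(Psg \<pi> t \<phi> x - \<phi> x) / t\<bar> \<le> C)}"

definition Kgen :: "(real \<Rightarrow> 'a \<Rightarrow> 'a measure) \<Rightarrow> ('a \<Rightarrow> real) \<Rightarrow> 'a \<Rightarrow> real" where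
  "Kgen \<pi> \<phi> x = Lim (at_right 0) (\<lambda>t. (Psg \<pi> t \<phi> x - \<phi> x) / t)"

definition measure_eq_solution ::
  "(real \<Rightarrow> 'a::metric_space \<Rightarrow> 'a measure) \<Rightarrow> 'a smeasure \<Rightarrow> (real \<Rightarrow> 'a smeasure) \<Rightarrow> bool" where
  "measure_eq_solution \<pi> \<mu> \<mu>t \<longleftrightarrow>
     (\<forall>t\<ge>0. fin_smeasure (\<mu>t t))
   \<and> (\<forall>T'>0. set_integrable lborel {0..T'} (\<lambda>t. tv (\<mu>t t)))
   \<and> (\<forall>\<phi>\<in>DK \<pi>.
        (\<forall>T'>0. abs_cont_on 0 T' (\<lambda>t. sint (\<mu>t t) \<phi>))
      \<and> (\<forall>t\<ge>0. set_integrable lborel {0..t} (\<lambda>s. sint (\<mu>t s) (Kgen \<pi> \<phi>))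
             \<and> sint (\<mu>t t) \<phi> - sint \<mu> \<phi>
                 = (\<integral>s\<in>{0..t}. sint (\<mu>t s) (Kgen \<pi> \<phi>) \<partial>lborel)))"

end

theory Submission
  imports Defs
begin

text \<open>For a fixed time s, the measure equation tested with u(s) gives
  <mu_r, u(s)> = <mu_a, u(s)> + int_a^r <mu_q, K u(s)> dq, whereas t |-> <mu_t, u(t)> moves both
  arguments at once. Over a cell (a, b] the increment <mu_b, u(b)> - <mu_a, u(a)> is the integral
  over (a, b] of the average
    phi_ab(q) = ((q - a) <mu_q, K u(b)> + (b - q) <mu_q, K u(a)> + <mu_q, u(b) - u(a)>) / (b - a),
  an identity that follows from Fubini's theorem and needs no continuity of q |-> mu_q. Along
  uniform partitions of [0, t] these averages are dominated by (sup |u_t| + sup |K u|) |mu_q|_TV,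
  which is integrable, and they converge to <mu_q, u_t(q) + K u(q)> by the mean value theorem and
  the continuity of u_t and K u in time; dominated convergence gives the formula. Absolute
  continuity follows since t |-> <mu_t, u(t)> is then an indefinite integral.\<close>

section \<open>Integration against signed measures\<close>

definition bounded_borel :: "('a::topological_space \<Rightarrow> real) \<Rightarrow> bool" where
  "bounded_borel f \<longleftrightarrow> f \<in> borel_measurable borel \<and> (\<exists>B. \<forall>x. \<bar>f x\<bar> \<le> B)"

lemma Cb_bounded_borel: "f \<in> Cb \<Longrightarrow> bounded_borel f"
  unfolding Cb_def bounded_borel_def bounded_real
  by (auto intro: borel_measurable_continuous_onI uniformly_continuous_imp_continuous)

lemma fin_smeasureD:
  assumes "fin_smeasure m"
  shows "finite_measure (fst m)" "finite_measure (snd m)"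
    and "sets (fst m) = sets borel" "sets (snd m) = sets borel"
  using assms unfolding fin_smeasure_def by auto

lemma integrable_bounded_borel:
  fixes f :: "'a::topological_space \<Rightarrow> real"
  assumes "finite_measure M" "sets M = sets borel" "f \<in> borel_measurable borel" "\<And>x. \<bar>f x\<bar> \<le> B"
  shows "integrable M f"
  using assms measurable_cong_sets[OF assms(2) refl, of borel]
  by (intro finite_measure.integrable_const_bound[where B=B]) auto

lemma fin_smeasure_integrable:
  assumes "fin_smeasure m" "bounded_borel f"
  shows "integrable (fst m) f" "integrable (snd m) f"
  using assms fin_smeasureD[OF assms(1)] integrable_bounded_borel
  unfolding bounded_borel_def by metis+

lemma sint_add:
  assumes "fin_smeasure m" "bounded_borel f" "bounded_borel g"
  shows "sint m (\<lambda>x. f x + g x) = sint m f + sint m g"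
  using fin_smeasure_integrable[OF assms(1,2)] fin_smeasure_integrable[OF assms(1,3)]
  unfolding sint_def by simp

lemma sint_diff:
  assumes "fin_smeasure m" "bounded_borel f" "bounded_borel g"
  shows "sint m (\<lambda>x. f x - g x) = sint m f - sint m g"
  using fin_smeasure_integrable[OF assms(1,2)] fin_smeasure_integrable[OF assms(1,3)]
  unfolding sint_def by simp

lemma sint_divide: "sint m (\<lambda>x. f x / c) = sint m f / c"
  unfolding sint_def by (simp add: diff_divide_distrib)

lemma sint_tendsto:
  fixes m :: "'a::topological_space smeasure"
  assumes m: "fin_smeasure m" and F: "\<And>n. F n \<in> borel_measurable borel"
    and bound: "\<And>n x. \<bar>F n x\<bar> \<le> B" and lim: "\<And>x. (\<lambda>n. F n x) \<longlonglongrightarrow> f x"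
  shows "(\<lambda>n. sint m (F n)) \<longlonglongrightarrow> sint m f"
proof -
  have f: "f \<in> borel_measurable borel" using lim F by (rule borel_measurable_LIMSEQ_real)
  have "(\<lambda>n. \<integral>x. F n x \<partial>M) \<longlonglongrightarrow> (\<integral>x. f x \<partial>M)"
    if "finite_measure M" "sets M = sets borel" for M
  proof (rule integral_dominated_convergence[where w="\<lambda>_. B"])
    show "f \<in> borel_measurable M" "\<And>n. F n \<in> borel_measurable M"
      using f F measurable_cong_sets[OF that(2) refl] by auto
  qed (use that bound lim finite_measure.integrable_const in auto)
  from tendsto_diff[OF this this] show ?thesis
    using fin_smeasureD[OF m] unfolding sint_def by blast
qed

lemma integral_indicator_le_of_emeasure_le:
  fixes h :: "'a \<Rightarrow> real"
  assumes M: "finite_measure M" and N: "finite_measure N" and sets_eq: "sets N = sets M"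
    and Y: "Y \<in> sets M" and le: "\<And>X. X \<in> sets M \<Longrightarrow> X \<subseteq> Y \<Longrightarrow> emeasure N X \<le> emeasure M X"
    and h: "h \<in> borel_measurable M" "\<And>x. 0 \<le> h x" "\<And>x. h x \<le> B"
  shows "(\<integral>x. indicator Y x * h x \<partial>N) \<le> (\<integral>x. indicator Y x * h x \<partial>M)"
proof -
  have hN: "h \<in> borel_measurable N" using h(1) measurable_cong_sets[OF sets_eq refl, of borel] by metis
  have YN: "Y \<in> sets N" using Y sets_eq by simp
  have "density N (indicator Y) \<le> density M (indicator Y)"
  proof (subst le_measure, safe)
    fix A assume "A \<in> sets (density N (indicator Y))"
    then have A: "A \<in> sets M" "A \<in> sets N" using sets_eq by auto
    show "emeasure (density N (indicator Y)) A \<le> emeasure (density M (indicator Y)) A"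
      using le[of "Y \<inter> A"] A Y YN by (simp add: emeasure_restricted)
  qed (use sets_eq in auto)
  then have "(\<integral>\<^sup>+x. h x \<partial>density N (indicator Y)) \<le> (\<integral>\<^sup>+x. h x \<partial>density M (indicator Y))"
    by (rule nn_integral_mono_measure[rotated]) (simp add: sets_eq)
  moreover have "(\<integral>\<^sup>+x. h x \<partial>density L (indicator Y)) = (\<integral>\<^sup>+x. indicator Y x * h x \<partial>L)"
    if "Y \<in> sets L" "h \<in> borel_measurable L" for L
    using that by (simp add: nn_integral_density) (intro nn_integral_cong, simp add: indicator_def)
  ultimately have nn_le: "(\<integral>\<^sup>+x. indicator Y x * h x \<partial>N) \<le> (\<integral>\<^sup>+x. indicator Y x * h x \<partial>M)"
    using Y YN h(1) hN by simp
  have "integrable M (\<lambda>x. indicator Y x * h x)"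
    using M Y h by (intro finite_measure.integrable_const_bound[where B=B])
      (auto simp: indicator_def intro: order_trans)
  then have "(\<integral>\<^sup>+x. indicator Y x * h x \<partial>M) < top"
    using h(2) by (simp add: integrable_iff_bounded less_top)
  then show ?thesis
    using nn_le Y YN h hN
    by (subst (1 2) integral_eq_nn_integral) (auto intro!: enn2real_mono)
qed

lemma abs_integral_indicator_diff_le:
  fixes f :: "'a \<Rightarrow> real"
  assumes M: "finite_measure M" and N: "finite_measure N" and sets_eq: "sets N = sets M"
    and Y: "Y \<in> sets M" and le: "\<And>X. X \<in> sets M \<Longrightarrow> X \<subseteq> Y \<Longrightarrow> emeasure N X \<le> emeasure M X"
    and f: "f \<in> borel_measurable M" "\<And>x. \<bar>f x\<bar> \<le> B"
  shows "\<bar>(\<integral>x. indicator Y x * f x \<partial>M) - (\<integral>x. indicator Y x * f x \<partial>N)\<bar>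
    \<le> B * (measure M Y - measure N Y)"
proof -
  have expand: "(\<integral>x. indicator Y x * (B + c * f x) \<partial>L) = B * measure L Y + c * (\<integral>x. indicator Y x * f x \<partial>L)"
    if L: "finite_measure L" "sets L = sets M" for L c
  proof -
    have "f \<in> borel_measurable L" using f(1) measurable_cong_sets[OF L(2) refl, of borel] by metis
    then have "integrable L (\<lambda>x. indicator Y x * f x)"
      using L Y f(2) by (intro finite_measure.integrable_const_bound[where B=B])
        (auto simp: indicator_def intro: order_trans[OF abs_ge_zero])
    moreover have "integrable L (\<lambda>x. B * indicator Y x)"
      using L Y finite_measure.emeasure_finite[of L Y]
      by (intro integrable_mult_right integrable_real_indicator) (auto simp: top.not_eq_extremum)
    ultimately show ?thesis
      using L Y by (simp add: distrib_left distrib_right mult.assoc[symmetric] mult.commute[of c])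
  qed
  have mono: "(\<integral>x. indicator Y x * (B + c * f x) \<partial>N) \<le> (\<integral>x. indicator Y x * (B + c * f x) \<partial>M)"
    if c: "c \<in> {-1, 1}" for c :: real
  proof (rule integral_indicator_le_of_emeasure_le[OF M N sets_eq Y])
    show "0 \<le> B + c * f x" "B + c * f x \<le> 2 * B" for x
      using f(2)[of x] c by (auto simp: abs_le_iff)
    show "(\<lambda>x. B + c * f x) \<in> borel_measurable M" using f(1) by measurable
  qed (rule le)
  have "B * measure N Y + c * (\<integral>x. indicator Y x * f x \<partial>N)
      \<le> B * measure M Y + c * (\<integral>x. indicator Y x * f x \<partial>M)" if "c \<in> {-1, 1}" for c :: real
    using mono[OF that] expand[OF M refl, of c] expand[OF N sets_eq, of c] by simp
  from this[of 1] this[of "-1"] show ?thesis by (simp add: abs_le_iff right_diff_distrib)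
qed

lemma smeas_diff_le_tv:
  assumes m: "fin_smeasure m" and A: "A \<in> sets borel"
  shows "smeas m A - smeas m (UNIV - A) \<le> tv m"
proof -
  note fin = fin_smeasureD[OF m]
  have "smeas m X - smeas m (UNIV - X) \<le> measure (fst m) (space (fst m)) + measure (snd m) (space (snd m))" for X
    unfolding smeas_def
    using finite_measure.bounded_measure[OF fin(1), of X] finite_measure.bounded_measure[OF fin(2), of "UNIV - X"]
    by (smt (verit) measure_nonneg)
  then have "bdd_above ((\<lambda>X. smeas m X - smeas m (UNIV - X)) ` sets borel)"
    by (intro bdd_aboveI2)
  then show ?thesis unfolding tv_def using A by (rule cSUP_upper2) auto
qed

lemma abs_sint_le_tv:
  fixes m :: "'a::topological_space smeasure"
  assumes m: "fin_smeasure m" and f: "f \<in> borel_measurable borel" "\<And>x. \<bar>f x\<bar> \<le> B"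
  shows "\<bar>sint m f\<bar> \<le> B * tv m"
proof -
  define M1 M2 where "M1 = fst m" and "M2 = snd m"
  note fin = fin_smeasureD[OF m, folded M1_def M2_def]
  have sets_eq: "sets M2 = sets M1" "sets M1 = sets M2" using fin by simp_all
  obtain Y where Y: "Y \<in> sets M1"
    and le_Y: "\<And>X. X \<in> sets M1 \<Longrightarrow> X \<subseteq> Y \<Longrightarrow> emeasure M2 X \<le> emeasure M1 X"
    and le_Z: "\<And>X. X \<in> sets M1 \<Longrightarrow> X \<inter> Y = {} \<Longrightarrow> emeasure M1 X \<le> emeasure M2 X"
    using finite_unsigned_Hahn_decomposition[OF fin(1,2) sets_eq(1)] by (elim bexE conjE) blast
  define Z where "Z = UNIV - Y"
  have Y_borel: "Y \<in> sets borel" and Z: "Z \<in> sets M2" using Y fin by (auto simp: Z_def)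
  have fM: "f \<in> borel_measurable M1" "f \<in> borel_measurable M2"
    using f(1) measurable_cong_sets[OF fin(3) refl, of borel]
      measurable_cong_sets[OF fin(4) refl, of borel] by metis+
  have split: "(\<integral>x. f x \<partial>L) = (\<integral>x. indicator Y x * f x \<partial>L) + (\<integral>x. indicator Z x * f x \<partial>L)"
    if "finite_measure L" "sets L = sets borel" for L
  proof -
    have "(\<integral>x. f x \<partial>L) = (\<integral>x. indicator Y x * f x + indicator Z x * f x \<partial>L)"
      by (rule Bochner_Integration.integral_cong) (auto simp: Z_def indicator_def)
    also have "\<dots> = (\<integral>x. indicator Y x * f x \<partial>L) + (\<integral>x. indicator Z x * f x \<partial>L)"
      using that Y_borel f by (intro Bochner_Integration.integral_add integrable_bounded_borel[where B=B])
        (auto simp: Z_def indicator_def intro: order_trans[OF abs_ge_zero])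
    finally show ?thesis .
  qed
  have "\<bar>(\<integral>x. indicator Y x * f x \<partial>M1) - (\<integral>x. indicator Y x * f x \<partial>M2)\<bar>
      \<le> B * (measure M1 Y - measure M2 Y)"
    by (rule abs_integral_indicator_diff_le[OF fin(1,2) sets_eq(1) Y le_Y fM(1) f(2)])
  moreover have "\<bar>(\<integral>x. indicator Z x * f x \<partial>M2) - (\<integral>x. indicator Z x * f x \<partial>M1)\<bar>
      \<le> B * (measure M2 Z - measure M1 Z)"
    using sets_eq le_Z
    by (intro abs_integral_indicator_diff_le[OF fin(2,1) sets_eq(2) Z _ fM(2) f(2)]) (auto simp: Z_def)
  moreover have "sint m f = ((\<integral>x. indicator Y x * f x \<partial>M1) - (\<integral>x. indicator Y x * f x \<partial>M2))
      - ((\<integral>x. indicator Z x * f x \<partial>M2) - (\<integral>x. indicator Z x * f x \<partial>M1))"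
    using split[OF fin(1,3)] split[OF fin(2,4)] unfolding sint_def M1_def M2_def by simp
  ultimately have "\<bar>sint m f\<bar> \<le> B * (smeas m Y - smeas m Z)"
    unfolding smeas_def M1_def[symmetric] M2_def[symmetric] right_diff_distrib by linarith
  also have "\<dots> \<le> B * tv m"
    using smeas_diff_le_tv[OF m Y_borel] f(2) order_trans[OF abs_ge_zero]
    unfolding Z_def by (blast intro: mult_left_mono)
  finally show ?thesis .
qed

section \<open>Integrals on the real line\<close>

lemma set_integral_singleton_lborel: "(\<integral>x\<in>{c}. f x \<partial>lborel) = (0::real)"
  unfolding set_lebesgue_integral_def
  by (subst integral_discrete_difference[where X="{c}" and g="\<lambda>_. 0"]) auto

lemma set_integral_Icc_split:
  fixes g :: "real \<Rightarrow> real"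
  assumes g: "set_integrable lborel {a..c} g" and "a \<le> b" "b \<le> c"
  shows "(\<integral>s\<in>{a..c}. g s \<partial>lborel) = (\<integral>s\<in>{a..b}. g s \<partial>lborel) + (\<integral>s\<in>{b<..c}. g s \<partial>lborel)"
proof -
  have "{a..c} = {a..b} \<union> {b<..c}" using assms by auto
  moreover have "set_integrable lborel {a..b} g" "set_integrable lborel {b<..c} g"
    using assms by (auto intro: set_integrable_subset[OF g])
  ultimately show ?thesis by (simp add: set_integral_Un ivl_disj_int_two(8))
qed

lemma integral_truncation_tendsto:
  fixes G :: "'a \<Rightarrow> real"
  assumes G: "integrable M G"
  shows "(\<lambda>N. \<integral>x. min (G x) (real N) \<partial>M) \<longlonglongrightarrow> (\<integral>x. G x \<partial>M)"
proof (rule integral_dominated_convergence[where w="\<lambda>x. \<bar>G x\<bar>"])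
  show "AE x in M. (\<lambda>N. min (G x) (real N)) \<longlonglongrightarrow> G x"
  proof (rule AE_I2)
    fix x
    obtain N0 :: nat where "G x \<le> real N0" using real_arch_simple by blast
    then have "\<forall>N\<ge>N0. min (G x) (real N) = G x" by (auto intro: order_trans)
    then show "(\<lambda>N. min (G x) (real N)) \<longlonglongrightarrow> G x"
      by (intro tendsto_eventually) (auto simp: eventually_sequentially)
  qed
qed (use G borel_measurable_integrable[OF G] in auto)

lemma set_integral_abs_less_on_small_sets:
  fixes f :: "'a \<Rightarrow> real"
  assumes f: "integrable M f" and \<epsilon>: "0 < \<epsilon>"
  shows "\<exists>\<delta>>0. \<forall>A\<in>sets M. emeasure M A < ennreal \<delta> \<longrightarrow> (\<integral>x\<in>A. \<bar>f x\<bar> \<partial>M) < \<epsilon>"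
proof -
  define G where "G = (\<lambda>x. \<bar>f x\<bar>)"
  have G: "integrable M G" using f by (simp add: G_def)
  have G_meas: "G \<in> borel_measurable M" using G by (rule borel_measurable_integrable)
  have min_int: "integrable M (\<lambda>x. min (G x) (real N))" for N
    using G by (rule Bochner_Integration.integrable_bound) (use G_meas in \<open>auto simp: G_def\<close>)
  have "(\<lambda>N. \<integral>x. min (G x) (real N) \<partial>M) \<longlonglongrightarrow> (\<integral>x. G x \<partial>M)"
    using G by (rule integral_truncation_tendsto)
  from LIMSEQ_D[OF this, of "\<epsilon> / 2"] \<epsilon> obtain N :: nat
    where "\<bar>(\<integral>x. min (G x) (real N) \<partial>M) - (\<integral>x. G x \<partial>M)\<bar> < \<epsilon> / 2"
    by auto
  then have N: "(\<integral>x. G x \<partial>M) - (\<integral>x. min (G x) (real N) \<partial>M) < \<epsilon> / 2" by linarith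
  define \<delta> where "\<delta> = \<epsilon> / (2 * (real N + 1))"
  have "(\<integral>x\<in>A. \<bar>f x\<bar> \<partial>M) < \<epsilon>" if A: "A \<in> sets M" "emeasure M A < ennreal \<delta>" for A
  proof -
    have A_fin: "emeasure M A < \<infinity>"
      using A(2) ennreal_less_top[of \<delta>] order.strict_trans by (metis infinity_ennreal_def)
    have "(\<integral>x\<in>A. \<bar>f x\<bar> \<partial>M) \<le> (\<integral>x. (G x - min (G x) (real N)) + real N * indicator A x \<partial>M)"
      unfolding set_lebesgue_integral_def
      using G min_int A(1) A_fin
    proof (intro integral_mono)
      show "indicator A x *\<^sub>R \<bar>f x\<bar> \<le> G x - min (G x) (real N) + real N * indicator A x" for x
        by (cases "x \<in> A") (auto simp: G_def)
    qed (use integrable_mult_indicator[OF A(1) integrable_abs[OF f]] in auto)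
    also have "\<dots> = ((\<integral>x. G x \<partial>M) - (\<integral>x. min (G x) (real N) \<partial>M)) + real N * measure M A"
      using G min_int A(1) A_fin by simp
    also have "\<dots> < \<epsilon> / 2 + \<epsilon> / 2"
    proof (rule add_less_le_mono[OF N])
      have "measure M A \<le> \<delta>"
        using A A_fin \<epsilon> by (simp add: measure_def \<delta>_def enn2real_leI less_imp_le)
      then have "real N * measure M A \<le> real N * \<delta>" by (intro mult_left_mono) auto
      also have "\<dots> \<le> \<epsilon> / 2" using \<epsilon> by (simp add: \<delta>_def field_simps)
      finally show "real N * measure M A \<le> \<epsilon> / 2" .
    qed
    finally show ?thesis by simp
  qed
  moreover have "0 < \<delta>" using \<epsilon> by (simp add: \<delta>_def)
  ultimately show ?thesis by blast
qed

lemma abs_increment_le_set_integral: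
  fixes F g :: "real \<Rightarrow> real"
  assumes g: "set_integrable lborel {a..b} g"
    and F: "\<And>x. x \<in> {a..b} \<Longrightarrow> F x = F a + (\<integral>s\<in>{a..x}. g s \<partial>lborel)"
    and lr: "a \<le> l" "l \<le> r" "r \<le> b"
  shows "\<bar>F r - F l\<bar> \<le> (\<integral>x\<in>{l<..r}. \<bar>indicator {a..b} x * g x\<bar> \<partial>lborel)"
proof -
  have "set_integrable lborel {a..r} g" using lr by (intro set_integrable_subset[OF g]) auto
  from set_integral_Icc_split[OF this lr(1,2)]
  have "F r - F l = (\<integral>s\<in>{l<..r}. g s \<partial>lborel)" using F[of r] F[of l] lr by simp
  also have "\<dots> = (\<integral>s. indicator {l<..r} s * (indicator {a..b} s * g s) \<partial>lborel)"
    unfolding set_lebesgue_integral_def using lr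
    by (intro Bochner_Integration.integral_cong) (auto simp: indicator_def)
  finally have "\<bar>F r - F l\<bar> \<le> (\<integral>s. \<bar>indicator {l<..r} s * (indicator {a..b} s * g s)\<bar> \<partial>lborel)"
    by (simp only: integral_abs_bound)
  then show ?thesis by (simp add: set_lebesgue_integral_def abs_mult)
qed

lemma abs_cont_on_indefinite_integral:
  fixes F g :: "real \<Rightarrow> real"
  assumes g: "set_integrable lborel {a..b} g"
    and F: "\<And>x. x \<in> {a..b} \<Longrightarrow> F x = F a + (\<integral>s\<in>{a..x}. g s \<partial>lborel)"
  shows "abs_cont_on a b F"
  unfolding abs_cont_on_def
proof (intro allI impI)
  fix \<epsilon> :: real assume "0 < \<epsilon>"
  define f where "f = (\<lambda>x. indicator {a..b} x * g x)"
  have f: "integrable lborel f" using g by (simp add: set_integrable_def f_def)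
  obtain \<delta> where \<delta>: "0 < \<delta>"
    and small: "\<And>A. A \<in> sets lborel \<Longrightarrow> emeasure lborel A < ennreal \<delta> \<Longrightarrow> (\<integral>x\<in>A. \<bar>f x\<bar> \<partial>lborel) < \<epsilon>"
    using set_integral_abs_less_on_small_sets[OF f \<open>0 < \<epsilon>\<close>] by blast
  show "\<exists>\<delta>>0. \<forall>(n::nat) (l::nat \<Rightarrow> real) r.
      (\<forall>i<n. a \<le> l i \<and> l i \<le> r i \<and> r i \<le> b) \<and> (\<forall>i<n. \<forall>j<n. i \<noteq> j \<longrightarrow> r i \<le> l j \<or> r j \<le> l i)
      \<and> (\<Sum>i<n. r i - l i) < \<delta> \<longrightarrow> (\<Sum>i<n. \<bar>F (r i) - F (l i)\<bar>) < \<epsilon>"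
  proof (intro exI[of _ \<delta>] conjI \<delta> allI impI, elim conjE)
    fix n :: nat and l r :: "nat \<Rightarrow> real"
    assume lr: "\<forall>i<n. a \<le> l i \<and> l i \<le> r i \<and> r i \<le> b"
      and disj: "\<forall>i<n. \<forall>j<n. i \<noteq> j \<longrightarrow> r i \<le> l j \<or> r j \<le> l i"
      and short: "(\<Sum>i<n. r i - l i) < \<delta>"
    define I where "I i = {l i<..r i}" for i
    have I_disj: "disjoint_family_on I {..<n}"
      using disj unfolding disjoint_family_on_def I_def by fastforce
    have I_int: "integrable lborel (\<lambda>x. indicator (I i) x * \<bar>f x\<bar>)" for i
      using integrable_mult_indicator[of "I i" lborel, OF _ integrable_abs[OF f]] by (simp add: I_def)
    have "\<bar>F (r i) - F (l i)\<bar> \<le> (\<integral>x\<in>I i. \<bar>f x\<bar> \<partial>lborel)" if "i < n" for i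
      using abs_increment_le_set_integral[OF g F, of "l i" "r i"] lr that by (simp add: I_def f_def)
    then have "(\<Sum>i<n. \<bar>F (r i) - F (l i)\<bar>) \<le> (\<Sum>i<n. \<integral>x\<in>I i. \<bar>f x\<bar> \<partial>lborel)"
      by (intro sum_mono) auto
    also have "\<dots> = (\<integral>x\<in>(\<Union>i<n. I i). \<bar>f x\<bar> \<partial>lborel)"
      unfolding set_lebesgue_integral_def indicator_UN_disjoint[OF finite_lessThan I_disj]
      using I_int by (simp add: Bochner_Integration.integral_sum[symmetric] sum_distrib_right)
    also have "\<dots> < \<epsilon>"
    proof (rule small)
      have "emeasure lborel (\<Union>i<n. I i) = (\<Sum>i<n. emeasure lborel (I i))"
        using I_disj by (intro sum_emeasure[symmetric]) (auto simp: I_def[abs_def])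
      also have "\<dots> = ennreal (\<Sum>i<n. r i - l i)"
        using lr by (simp add: I_def) (intro sum_ennreal, simp)
      finally show "emeasure lborel (\<Union>i<n. I i) < ennreal \<delta>" using short \<delta> by (simp add: ennreal_lessI)
    qed (auto simp: I_def)
    finally show "(\<Sum>i<n. \<bar>F (r i) - F (l i)\<bar>) < \<epsilon>" .
  qed
qed

lemma set_integral_indefinite_integral_Ioc:
  fixes f :: "real \<Rightarrow> real"
  assumes f: "set_integrable lborel {a<..b} f"
  shows "set_integrable lborel {a<..b} (\<lambda>q. (b - q) * f q)"
    and "set_integrable lborel {a<..b} (\<lambda>r. \<integral>q\<in>{a<..r}. f q \<partial>lborel)"
    and "(\<integral>r\<in>{a<..b}. (\<integral>q\<in>{a<..r}. f q \<partial>lborel) \<partial>lborel) = (\<integral>q\<in>{a<..b}. (b - q) * f q \<partial>lborel)"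
proof -
  define g where "g q = indicator {a<..b} q * f q" for q
  define k where "k q r = g q * indicator {q..b} r" for q r :: real
  have g: "integrable lborel g" using f unfolding set_integrable_def g_def by simp
  have inner: "(\<integral>r. k q r \<partial>lborel) = g q * (b - q)" for q
    by (cases "q \<le> b") (auto simp: k_def g_def)
  have swap: "k q r = indicator {a<..b} r * (indicator {a<..r} q * f q)" for q r
    by (auto simp: k_def g_def indicator_def)
  have "integrable (lborel \<Otimes>\<^sub>M lborel) (\<lambda>(q, r). k q r)"
  proof (rule lborel_pair.Fubini_integrable)
    have [measurable]: "g \<in> borel_measurable borel" using g by (simp add: borel_measurable_integrable)
    show "(\<lambda>(q, r). k q r) \<in> borel_measurable (lborel \<Otimes>\<^sub>M lborel)"
      unfolding k_def indicator_def atLeastAtMost_iff by measurable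
    have "(\<integral>r. norm (k q r) \<partial>lborel) = \<bar>g q\<bar> * (b - q)" for q
      by (cases "q \<le> b") (auto simp: k_def g_def abs_mult)
    moreover have "integrable lborel (\<lambda>q. \<bar>g q\<bar> * (b - q))"
    proof (rule Bochner_Integration.integrable_bound)
      show "integrable lborel (\<lambda>q. (b - a) * \<bar>g q\<bar>)" using g by auto
      show "AE q in lborel. norm (\<bar>g q\<bar> * (b - q)) \<le> norm ((b - a) * \<bar>g q\<bar>)"
        by (auto simp: g_def indicator_def abs_mult mult.commute intro!: mult_left_mono)
    qed measurable
    ultimately show "integrable lborel (\<lambda>q. \<integral>r. norm (case (q, r) of (q, r) \<Rightarrow> k q r) \<partial>lborel)"
      by simp
    show "AE q in lborel. integrable lborel (\<lambda>r. case (q, r) of (q, r) \<Rightarrow> k q r)"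
      unfolding k_def
      by (intro AE_I2 integrable_mult_right integrable_real_indicator) (auto simp: emeasure_lborel_Icc_eq)
  qed
  note k_integrable = this
  have outer: "(\<integral>q. k q r \<partial>lborel) = indicator {a<..b} r * (\<integral>q\<in>{a<..r}. f q \<partial>lborel)" for r
    unfolding swap set_lebesgue_integral_def by simp
  show "set_integrable lborel {a<..b} (\<lambda>q. (b - q) * f q)"
    using lborel_pair.integrable_fst[OF k_integrable]
    unfolding inner set_integrable_def g_def by (simp add: mult_ac)
  show "set_integrable lborel {a<..b} (\<lambda>r. \<integral>q\<in>{a<..r}. f q \<partial>lborel)"
    using lborel_pair.integrable_snd[OF k_integrable] unfolding outer set_integrable_def by simp
  show "(\<integral>r\<in>{a<..b}. (\<integral>q\<in>{a<..r}. f q \<partial>lborel) \<partial>lborel) = (\<integral>q\<in>{a<..b}. (b - q) * f q \<partial>lborel)"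
    using lborel_pair.Fubini_integral[OF k_integrable]
    unfolding outer inner set_lebesgue_integral_def g_def by (simp add: mult_ac)
qed

lemma set_integrable_const_Ioc: "set_integrable lborel {a<..b::real} (\<lambda>_. c :: real)"
  by (rule set_integrable_subset[OF borel_integrable_atLeastAtMost'[of a b]])
    (auto intro: continuous_intros)

lemma set_integral_averaged_increment:
  fixes G H :: "real \<Rightarrow> real \<Rightarrow> real"
  assumes ab: "a < b"
    and H: "\<And>s. s \<in> {a, b} \<Longrightarrow> set_integrable lborel {a<..b} (H s)"
    and G: "\<And>s r. s \<in> {a, b} \<Longrightarrow> r \<in> {a<..b} \<Longrightarrow> G s r = G s a + (\<integral>q\<in>{a<..r}. H s q \<partial>lborel)"
  shows "set_integrable lborel {a<..b} (\<lambda>q. (q - a) * H b q + (b - q) * H a q + (G b q - G a q))"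
    and "(\<integral>q\<in>{a<..b}. (q - a) * H b q + (b - q) * H a q + (G b q - G a q) \<partial>lborel)
      = (b - a) * (G b b - G a a)"
proof -
  txt \<open>With G s q = G s a + I s q and q - a = (b - a) - (b - q), Fubini's identity
    \<open>\<integral>(b - q) H s q = \<integral>I s\<close> cancels everything but (b - a) (I b b + G b a - G a a).\<close>
  define I where "I s r = (\<integral>q\<in>{a<..r}. H s q \<partial>lborel)" for s r
  define c where "c = G b a - G a a"
  have integrand: "(q - a) * H b q + (b - q) * H a q + (G b q - G a q)
      = ((b - a) * H b q - (b - q) * H b q + (b - q) * H a q + c) + (I b q - I a q)"
    if "q \<in> {a<..b}" for q
    using G[of a q] G[of b q] that by (simp add: I_def c_def algebra_simps)
  note Hb = H[of b] and Ha = H[of a]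
  note I_b = set_integral_indefinite_integral_Ioc[OF Hb, folded I_def, simplified]
   and I_a = set_integral_indefinite_integral_Ioc[OF Ha, folded I_def, simplified]
  have int1: "set_integrable lborel {a<..b} (\<lambda>q. (b - a) * H b q - (b - q) * H b q + (b - q) * H a q + c)"
    using Hb I_b(1) I_a(1) set_integrable_const_Ioc by (auto intro!: set_integral_add set_integral_diff)
  have int2: "set_integrable lborel {a<..b} (\<lambda>q. I b q - I a q)"
    using I_b(2) I_a(2) by (rule set_integral_diff)
  have Hb': "set_integrable lborel {a<..b} (\<lambda>q. (b - a) * H b q)" using Hb by simp
  have const: "(\<integral>q\<in>{a<..b}. c \<partial>lborel) = (b - a) * c" using ab by (simp add: set_integral_const)
  show "set_integrable lborel {a<..b} (\<lambda>q. (q - a) * H b q + (b - q) * H a q + (G b q - G a q))"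
    using set_integral_add(1)[OF int1 int2] by (rule set_integrable_cong[THEN iffD1, rotated -1]) (auto simp: integrand)
  have "(\<integral>q\<in>{a<..b}. (q - a) * H b q + (b - q) * H a q + (G b q - G a q) \<partial>lborel)
      = (\<integral>q\<in>{a<..b}. ((b - a) * H b q - (b - q) * H b q + (b - q) * H a q + c) + (I b q - I a q) \<partial>lborel)"
    by (rule set_lebesgue_integral_cong) (auto simp: integrand)
  also have "\<dots> = (b - a) * (I b b + c)"
    using Hb' I_b I_a set_integrable_const_Ioc int1 int2 const
    by (simp add: set_integral_add set_integral_diff) (simp add: I_def algebra_simps)
  also have "\<dots> = (b - a) * (G b b - G a a)"
    using G[of b b] ab by (simp add: I_def c_def)
  finally show "(\<integral>q\<in>{a<..b}. (q - a) * H b q + (b - q) * H a q + (G b q - G a q) \<partial>lborel)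
      = (b - a) * (G b b - G a a)" .
qed

section \<open>Uniform partitions\<close>

lemma ceiling_eq_Suc_iff: "\<lceil>x :: real\<rceil> = int (Suc i) \<longleftrightarrow> 0 < x \<and> i = nat \<lceil>x\<rceil> - 1"
proof
  assume c: "\<lceil>x\<rceil> = int (Suc i)"
  then have "real i < x" by (simp add: ceiling_eq_iff)
  then show "0 < x \<and> i = nat \<lceil>x\<rceil> - 1" using c by simp
next
  assume "0 < x \<and> i = nat \<lceil>x\<rceil> - 1"
  moreover have "0 < \<lceil>x\<rceil>" if "0 < x" using that by simp
  ultimately show "\<lceil>x\<rceil> = int (Suc i)" by linarith
qed

definition uniform_point :: "real \<Rightarrow> nat \<Rightarrow> nat \<Rightarrow> real" where
  "uniform_point t m i = real i * t / real (Suc m)"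

definition uniform_cell :: "real \<Rightarrow> nat \<Rightarrow> real \<Rightarrow> nat" where
  "uniform_cell t m q = nat \<lceil>q * real (Suc m) / t\<rceil> - 1"

lemma uniform_point_bounds:
  assumes "0 < t"
  shows "0 \<le> uniform_point t m i" "uniform_point t m i < uniform_point t m (Suc i)"
    and "i < Suc m \<Longrightarrow> uniform_point t m (Suc i) \<le> t"
    and "uniform_point t m 0 = 0" "uniform_point t m (Suc m) = t"
    and "uniform_point t m (Suc i) - uniform_point t m i = t / real (Suc m)"
proof -
  show "0 \<le> uniform_point t m i" "uniform_point t m 0 = 0" "uniform_point t m (Suc m) = t"
    using assms by (simp_all add: uniform_point_def)
  show "uniform_point t m i < uniform_point t m (Suc i)"
    using assms by (simp add: uniform_point_def divide_strict_right_mono)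
  show "uniform_point t m (Suc i) - uniform_point t m i = t / real (Suc m)"
    by (simp add: uniform_point_def diff_divide_distrib[symmetric] algebra_simps)
  assume "i < Suc m"
  then have "real (Suc i) * t \<le> real (Suc m) * t" using assms by (intro mult_right_mono) auto
  then show "uniform_point t m (Suc i) \<le> t" by (simp add: uniform_point_def pos_divide_le_eq mult.commute)
qed

lemma mem_uniform_cell_iff:
  assumes "0 < t"
  shows "q \<in> {uniform_point t m i<..uniform_point t m (Suc i)} \<longleftrightarrow> 0 < q \<and> i = uniform_cell t m q"
proof -
  have "q \<in> {uniform_point t m i<..uniform_point t m (Suc i)} \<longleftrightarrow> \<lceil>q * real (Suc m) / t\<rceil> = int (Suc i)"
    using assms by (simp add: uniform_point_def ceiling_eq_iff field_simps)
  then show ?thesis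
    unfolding ceiling_eq_Suc_iff uniform_cell_def using assms
    by (simp add: zero_less_divide_iff zero_less_mult_iff add_pos_nonneg)
qed

lemma uniform_cell_less:
  assumes "0 < t" "q \<in> {0<..t}"
  shows "uniform_cell t m q < Suc m"
proof -
  have "q * real (Suc m) \<le> t * real (Suc m)" using assms by (intro mult_right_mono) auto
  then have "q * real (Suc m) / t \<le> real (Suc m)" using assms by (simp add: pos_divide_le_eq mult.commute)
  then show ?thesis unfolding uniform_cell_def by linarith
qed

lemma sum_uniform_cells:
  fixes f :: "nat \<Rightarrow> real \<Rightarrow> real"
  assumes t: "0 < t"
  shows "(\<Sum>i<Suc m. indicator {uniform_point t m i<..uniform_point t m (Suc i)} q * f i q)
    = indicator {0<..t} q * f (uniform_cell t m q) q"
proof -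
  have "indicator {uniform_point t m i<..uniform_point t m (Suc i)} q
      = (if i = uniform_cell t m q \<and> q \<in> {0<..t} then 1 else (0::real))" if "i < Suc m" for i
    using mem_uniform_cell_iff[OF t, of q m i] uniform_point_bounds(3)[OF t that]
    by (auto simp: indicator_def)
  then have "(\<Sum>i<Suc m. indicator {uniform_point t m i<..uniform_point t m (Suc i)} q * f i q)
      = (\<Sum>i<Suc m. if i = uniform_cell t m q then indicator {0<..t} q * f (uniform_cell t m q) q else 0)"
    by (intro sum.cong) (auto simp: indicator_def)
  also have "\<dots> = indicator {0<..t} q * f (uniform_cell t m q) q"
    using uniform_cell_less[OF t, of q m] by (subst sum.delta) (auto simp: indicator_def)
  finally show ?thesis .
qed

lemma uniform_cell_tendsto:
  assumes t: "0 < t" and q: "q \<in> {0<..t}"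
  shows "(\<lambda>m. uniform_point t m (uniform_cell t m q)) \<longlonglongrightarrow> q"
    and "(\<lambda>m. uniform_point t m (Suc (uniform_cell t m q))) \<longlonglongrightarrow> q"
proof -
  have "(\<lambda>m. t / real (Suc m)) \<longlonglongrightarrow> 0"
    using LIMSEQ_Suc[OF lim_const_over_n[of t]] by simp
  then have lim: "(\<lambda>m. q - t / real (Suc m)) \<longlonglongrightarrow> q" "(\<lambda>m. q + t / real (Suc m)) \<longlonglongrightarrow> q"
    using tendsto_diff[OF tendsto_const] tendsto_add[OF tendsto_const] by fastforce+
  have "q - t / real (Suc m) \<le> uniform_point t m (uniform_cell t m q)"
    "uniform_point t m (uniform_cell t m q) \<le> q"
    "q \<le> uniform_point t m (Suc (uniform_cell t m q))"
    "uniform_point t m (Suc (uniform_cell t m q)) \<le> q + t / real (Suc m)" for m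
    using mem_uniform_cell_iff[OF t, of q m "uniform_cell t m q"] q
      uniform_point_bounds(6)[OF t, of m "uniform_cell t m q"] by auto
  then show "(\<lambda>m. uniform_point t m (uniform_cell t m q)) \<longlonglongrightarrow> q"
    and "(\<lambda>m. uniform_point t m (Suc (uniform_cell t m q))) \<longlonglongrightarrow> q"
    by (auto intro: tendsto_sandwich[OF _ _ lim(1) tendsto_const] tendsto_sandwich[OF _ _ tendsto_const lim(2)])
qed

lemma set_integral_Icc_of_dominated_convergence:
  fixes \<psi> :: "nat \<Rightarrow> real \<Rightarrow> real" and g W :: "real \<Rightarrow> real"
  assumes t: "0 \<le> t"
    and \<psi>: "\<And>m. integrable lborel (\<psi> m)" "\<And>m. (\<integral>q. \<psi> m q \<partial>lborel) = c"
    and W: "integrable lborel W" "\<And>m q. \<bar>\<psi> m q\<bar> \<le> W q"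
    and lim: "\<And>q. (\<lambda>m. \<psi> m q) \<longlonglongrightarrow> indicator {0<..t} q * g q"
  shows "set_integrable lborel {0..t} g" and "(\<integral>q\<in>{0..t}. g q \<partial>lborel) = c"
proof -
  define g' where "g' q = indicator {0<..t} q * g q" for q
  have \<psi>_meas: "\<psi> m \<in> borel_measurable lborel" for m using \<psi>(1) by (rule borel_measurable_integrable)
  have g'_meas: "g' \<in> borel_measurable lborel"
    using lim \<psi>_meas unfolding g'_def by (rule borel_measurable_LIMSEQ_real)
  have g': "integrable lborel g'"
    by (rule integrable_dominated_convergence[where s=\<psi>, OF g'_meas \<psi>_meas W(1)])
      (use lim W(2) in \<open>auto simp: g'_def\<close>)
  have "(\<lambda>m. \<integral>q. \<psi> m q \<partial>lborel) \<longlonglongrightarrow> (\<integral>q. g' q \<partial>lborel)"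
    by (rule integral_dominated_convergence[where s=\<psi>, OF g'_meas \<psi>_meas W(1)])
      (use lim W(2) in \<open>auto simp: g'_def\<close>)
  then have g'_integral: "(\<integral>q. g' q \<partial>lborel) = c"
    unfolding \<psi>(2) by (simp add: LIMSEQ_const_iff)
  have decomp: "indicator {0..t} q * g q = g' q + indicator {0} q * g 0" for q
    using t by (auto simp: g'_def indicator_def)
  have point: "integrable lborel (\<lambda>q. indicator {0::real} q * g 0)" by simp
  show "set_integrable lborel {0..t} g"
    unfolding set_integrable_def using g' point by (simp add: decomp)
  show "(\<integral>q\<in>{0..t}. g q \<partial>lborel) = c"
    unfolding set_lebesgue_integral_def using g' point g'_integral by (simp add: decomp)
qed

lemma increment_eq_set_integral_of_local_averages:
  fixes F g w :: "real \<Rightarrow> real" and \<phi> :: "real \<Rightarrow> real \<Rightarrow> real \<Rightarrow> real"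
  assumes t: "0 < t"
    and \<phi>_int: "\<And>a b. 0 \<le> a \<Longrightarrow> a < b \<Longrightarrow> b \<le> t \<Longrightarrow> set_integrable lborel {a<..b} (\<phi> a b)"
    and \<phi>_eq: "\<And>a b. 0 \<le> a \<Longrightarrow> a < b \<Longrightarrow> b \<le> t \<Longrightarrow> (\<integral>q\<in>{a<..b}. \<phi> a b q \<partial>lborel) = F b - F a"
    and \<phi>_bound: "\<And>a b q. 0 \<le> a \<Longrightarrow> a < b \<Longrightarrow> b \<le> t \<Longrightarrow> q \<in> {a<..b} \<Longrightarrow> \<bar>\<phi> a b q\<bar> \<le> w q"
    and w: "set_integrable lborel {0..t} w"
    and \<phi>_lim: "\<And>lo hi q. q \<in> {0<..t} \<Longrightarrow> (\<And>m. 0 \<le> lo m \<and> lo m < q \<and> q \<le> hi m \<and> hi m \<le> t) \<Longrightarrow>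
      lo \<longlonglongrightarrow> q \<Longrightarrow> hi \<longlonglongrightarrow> q \<Longrightarrow> (\<lambda>m. \<phi> (lo m) (hi m) q) \<longlonglongrightarrow> g q"
  shows "set_integrable lborel {0..t} g" and "F t - F 0 = (\<integral>q\<in>{0..t}. g q \<partial>lborel)"
proof -
  define P where "P m i = uniform_point t m i" for m i
  define lo hi where "lo m q = P m (uniform_cell t m q)" and "hi m q = P m (Suc (uniform_cell t m q))" for m q
  txt \<open>\<open>\<psi> m\<close> equals \<open>\<phi>\<close> of the cell containing q on each of the m + 1 cells,
    so its integral telescopes to F t - F 0.\<close>
  define \<psi> where "\<psi> m q = (\<Sum>i<Suc m. indicator {P m i<..P m (Suc i)} q * \<phi> (P m i) (P m (Suc i)) q)" for m q
  note P = uniform_point_bounds[OF t, of m for m, folded P_def]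
  have \<psi>_eq: "\<psi> m q = indicator {0<..t} q * \<phi> (lo m q) (hi m q) q" for m q
    unfolding \<psi>_def P_def lo_def hi_def by (rule sum_uniform_cells[OF t])
  have cell: "0 \<le> lo m q \<and> lo m q < q \<and> q \<le> hi m q \<and> hi m q \<le> t" if "q \<in> {0<..t}" for m q
    using mem_uniform_cell_iff[OF t, of q m "uniform_cell t m q"] uniform_cell_less[OF t that, of m]
      P(1,3) that unfolding lo_def hi_def P_def by auto
  have \<psi>_int: "integrable lborel (\<psi> m)" for m
    unfolding \<psi>_def using \<phi>_int[OF P(1,2,3)]
    by (intro Bochner_Integration.integrable_sum) (simp add: set_integrable_def)
  have "(\<integral>q. \<psi> m q \<partial>lborel) = (\<Sum>i<Suc m. F (P m (Suc i)) - F (P m i))" for m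
    unfolding \<psi>_def using \<phi>_int[OF P(1,2,3)] \<phi>_eq[OF P(1,2,3)]
    by (subst Bochner_Integration.integral_sum) (auto simp: set_integrable_def set_lebesgue_integral_def)
  also have "\<dots> m = F t - F 0" for m
    by (simp add: sum_lessThan_telescope[where f="\<lambda>i. F (P m i)"] P(4,5))
  finally have \<psi>_integral: "(\<integral>q. \<psi> m q \<partial>lborel) = F t - F 0" for m .
  have \<psi>_bound: "\<bar>\<psi> m q\<bar> \<le> indicator {0..t} q * \<bar>w q\<bar>" for m q
    using \<phi>_bound[of "lo m q" "hi m q" q] cell[of q m] by (fastforce simp: \<psi>_eq indicator_def)
  have \<psi>_lim: "(\<lambda>m. \<psi> m q) \<longlonglongrightarrow> indicator {0<..t} q * g q" for q
  proof (cases "q \<in> {0<..t}")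
    case True
    have "(\<lambda>m. lo m q) \<longlonglongrightarrow> q" "(\<lambda>m. hi m q) \<longlonglongrightarrow> q"
      using uniform_cell_tendsto[OF t True] unfolding lo_def hi_def P_def .
    from \<phi>_lim[OF True cell[OF True] this] show ?thesis using True by (simp add: \<psi>_eq)
  qed (simp add: \<psi>_eq)
  have "integrable lborel (\<lambda>q. indicator {0..t} q * \<bar>w q\<bar>)"
    using set_integrable_abs[OF w] by (simp add: set_integrable_def)
  from set_integral_Icc_of_dominated_convergence[OF _ \<psi>_int \<psi>_integral this \<psi>_bound \<psi>_lim] t
  show "set_integrable lborel {0..t} g" and "F t - F 0 = (\<integral>q\<in>{0..t}. g q \<partial>lborel)" by auto
qed

section \<open>Difference quotients\<close>

lemma difference_quotient_eq_derivative:
  fixes f f' :: "real \<Rightarrow> real"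
  assumes f: "\<And>s. s \<in> S \<Longrightarrow> (f has_real_derivative f' s) (at s within S)"
    and ab: "a < b" "{a..b} \<subseteq> S"
  shows "\<exists>\<xi>\<in>{a<..<b}. (f b - f a) / (b - a) = f' \<xi>"
proof -
  have "\<exists>\<xi>\<in>{a<..<b}. f b - f a = f' \<xi> * (b - a)"
  proof (rule mvt_simple[OF ab(1)])
    fix s assume "a \<le> s" "s \<le> b"
    with ab have "s \<in> S" by auto
    with f ab(2) have "(f has_real_derivative f' s) (at s within {a..b})"
      by (blast intro: DERIV_subset)
    then show "(f has_derivative (\<lambda>h. f' s * h)) (at s within {a..b})"
      by (simp add: has_field_derivative_def)
  qed
  then show ?thesis using ab by auto
qed

lemma difference_quotient_tendsto:
  fixes f f' :: "real \<Rightarrow> real" and lo hi :: "nat \<Rightarrow> real"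
  assumes f: "\<And>s. s \<in> S \<Longrightarrow> (f has_real_derivative f' s) (at s within S)"
    and f': "continuous_on S f'"
    and cells: "\<And>m. lo m < hi m \<and> lo m \<le> q \<and> q \<le> hi m \<and> {lo m..hi m} \<subseteq> S"
    and lo: "lo \<longlonglongrightarrow> q" and hi: "hi \<longlonglongrightarrow> q"
  shows "(\<lambda>m. (f (hi m) - f (lo m)) / (hi m - lo m)) \<longlonglongrightarrow> f' q"
proof -
  have "\<forall>m. \<exists>\<xi>. \<xi> \<in> {lo m<..<hi m} \<and> (f (hi m) - f (lo m)) / (hi m - lo m) = f' \<xi>"
    using difference_quotient_eq_derivative[OF f] cells by blast
  then obtain \<xi> where \<xi>: "\<And>m. \<xi> m \<in> {lo m<..<hi m} \<and> (f (hi m) - f (lo m)) / (hi m - lo m) = f' (\<xi> m)"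
    by (metis choice)
  have "\<xi> \<longlonglongrightarrow> q"
    by (rule tendsto_sandwich[OF _ _ lo hi]) (use \<xi> in \<open>auto intro: always_eventually less_imp_le\<close>)
  moreover have "\<xi> m \<in> S" "q \<in> S" for m using \<xi>[of m] cells[of m] by auto
  ultimately have "(\<lambda>m. f' (\<xi> m)) \<longlonglongrightarrow> f' q"
    using f' by (auto intro: continuous_on_tendsto_compose)
  then show ?thesis using \<xi> by simp
qed

lemma convex_combination_tendsto:
  fixes x y :: "nat \<Rightarrow> real"
  assumes \<alpha>: "\<And>m. 0 \<le> \<alpha> m \<and> \<alpha> m \<le> 1" and x: "x \<longlonglongrightarrow> l" and y: "y \<longlonglongrightarrow> l"
  shows "(\<lambda>m. \<alpha> m * x m + (1 - \<alpha> m) * y m) \<longlonglongrightarrow> l"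
proof -
  have lim: "(\<lambda>m. \<bar>x m - l\<bar> + \<bar>y m - l\<bar>) \<longlonglongrightarrow> 0"
    using tendsto_add[OF tendsto_rabs_zero[OF LIM_zero[OF x]] tendsto_rabs_zero[OF LIM_zero[OF y]]] by simp
  have bound: "norm (\<alpha> m * x m + (1 - \<alpha> m) * y m - l) \<le> \<bar>x m - l\<bar> + \<bar>y m - l\<bar>" for m
  proof -
    have "\<alpha> m * x m + (1 - \<alpha> m) * y m - l = \<alpha> m * (x m - l) + (1 - \<alpha> m) * (y m - l)"
      by (simp add: algebra_simps)
    also have "\<bar>\<dots>\<bar> \<le> \<alpha> m * \<bar>x m - l\<bar> + (1 - \<alpha> m) * \<bar>y m - l\<bar>"
      using \<alpha>[of m] by (intro order_trans[OF abs_triangle_ineq]) (simp add: abs_mult)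
    also have "\<dots> \<le> \<bar>x m - l\<bar> + \<bar>y m - l\<bar>"
      using \<alpha>[of m] by (intro add_mono[OF mult_left_le_one_le mult_left_le_one_le]) auto
    finally show ?thesis by simp
  qed
  have "(\<lambda>m. \<alpha> m * x m + (1 - \<alpha> m) * y m - l) \<longlonglongrightarrow> 0"
    by (rule Lim_null_comparison[OF always_eventually lim]) (use bound in blast)
  then show ?thesis by (rule LIM_zero_cancel)
qed

section \<open>Time-dependent test functions\<close>

lemma continuous_on_slice_snd:
  assumes "continuous_on (S \<times> UNIV) (\<lambda>(s, x). f s x)" "s \<in> S"
  shows "continuous_on UNIV (f s)"
  using continuous_on_compose2[OF assms(1) continuous_on_Pair[OF continuous_on_const continuous_on_id]] assms(2)
  by auto

lemma continuous_on_slice_fst: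
  assumes "continuous_on (S \<times> UNIV) (\<lambda>(s, x). f s x)"
  shows "continuous_on S (\<lambda>s. f s x)"
  using continuous_on_compose2[OF assms(1) continuous_on_Pair[OF continuous_on_id continuous_on_const]]
  by auto

text \<open>The generator enters only through KU s, its values on the test functions U s.\<close>

locale tested_measure_flow =
  fixes \<mu>t :: "real \<Rightarrow> 'a::topological_space smeasure" and \<mu>0 :: "'a smeasure"
    and T BUt BK :: real and U Ut KU :: "real \<Rightarrow> 'a \<Rightarrow> real"
  assumes T_nonneg: "0 \<le> T"
    and fin: "\<And>r. 0 \<le> r \<Longrightarrow> fin_smeasure (\<mu>t r)"
    and tv_int: "set_integrable lborel {0..T} (\<lambda>r. tv (\<mu>t r))"
    and KU_int: "\<And>s. s \<in> {0..T} \<Longrightarrow> set_integrable lborel {0..T} (\<lambda>r. sint (\<mu>t r) (KU s))"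
    and U_eq: "\<And>s r. s \<in> {0..T} \<Longrightarrow> r \<in> {0..T} \<Longrightarrow>
      sint (\<mu>t r) (U s) - sint \<mu>0 (U s) = (\<integral>q\<in>{0..r}. sint (\<mu>t q) (KU s) \<partial>lborel)"
    and U_bdd: "\<And>s. s \<in> {0..T} \<Longrightarrow> bounded_borel (U s)"
    and U_deriv: "\<And>x s. s \<in> {0..T} \<Longrightarrow> ((\<lambda>s. U s x) has_real_derivative Ut s x) (at s within {0..T})"
    and Ut_cont: "continuous_on ({0..T} \<times> UNIV) (\<lambda>(s, x). Ut s x)"
    and Ut_bdd: "\<And>s x. s \<in> {0..T} \<Longrightarrow> \<bar>Ut s x\<bar> \<le> BUt"
    and KU_cont: "continuous_on ({0..T} \<times> UNIV) (\<lambda>(s, x). KU s x)"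
    and KU_bdd: "\<And>s x. s \<in> {0..T} \<Longrightarrow> \<bar>KU s x\<bar> \<le> BK"
begin

lemma KU_bounded_borel: "s \<in> {0..T} \<Longrightarrow> bounded_borel (KU s)"
  unfolding bounded_borel_def
  using borel_measurable_continuous_onI[OF continuous_on_slice_snd[OF KU_cont]] KU_bdd by blast

lemma Ut_bounded_borel: "s \<in> {0..T} \<Longrightarrow> bounded_borel (Ut s)"
  unfolding bounded_borel_def
  using borel_measurable_continuous_onI[OF continuous_on_slice_snd[OF Ut_cont]] Ut_bdd by blast

lemma U_increment:
  assumes s: "s \<in> {0..T}" and r: "0 \<le> a" "a \<le> r" "r \<le> T"
  shows "sint (\<mu>t r) (U s) = sint (\<mu>t a) (U s) + (\<integral>q\<in>{a<..r}. sint (\<mu>t q) (KU s) \<partial>lborel)"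
proof -
  have "set_integrable lborel {0..r} (\<lambda>q. sint (\<mu>t q) (KU s))"
    using r by (intro set_integrable_subset[OF KU_int[OF s]]) auto
  from set_integral_Icc_split[OF this r(1,2)] show ?thesis
    using U_eq[OF s, of r] U_eq[OF s, of a] r by simp
qed

lemma U_quotient_bound:
  assumes "0 \<le> a" "a < b" "b \<le> T"
  shows "\<bar>(U b x - U a x) / (b - a)\<bar> \<le> BUt"
proof -
  have "\<exists>\<xi>\<in>{a<..<b}. (U b x - U a x) / (b - a) = Ut \<xi> x"
    by (rule difference_quotient_eq_derivative[where S="{0..T}"]) (use U_deriv assms in auto)
  then obtain \<xi> where "\<xi> \<in> {a<..<b}" "(U b x - U a x) / (b - a) = Ut \<xi> x" by blast
  then show ?thesis using Ut_bdd[of \<xi> x] assms by auto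
qed

lemma U_quotient_bounded_borel:
  assumes "0 \<le> a" "a < b" "b \<le> T"
  shows "bounded_borel (\<lambda>x. (U b x - U a x) / (b - a))"
  using U_bdd[of a] U_bdd[of b] U_quotient_bound[OF assms] assms
  unfolding bounded_borel_def by auto

definition local_average :: "real \<Rightarrow> real \<Rightarrow> real \<Rightarrow> real" where
  "local_average a b q = ((q - a) * sint (\<mu>t q) (KU b) + (b - q) * sint (\<mu>t q) (KU a)
     + (sint (\<mu>t q) (U b) - sint (\<mu>t q) (U a))) / (b - a)"

lemma local_average_integral:
  assumes ab: "0 \<le> a" "a < b" "b \<le> T"
  shows "set_integrable lborel {a<..b} (local_average a b)"
    and "(\<integral>q\<in>{a<..b}. local_average a b q \<partial>lborel) = sint (\<mu>t b) (U b) - sint (\<mu>t a) (U a)"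
proof -
  have H: "set_integrable lborel {a<..b} (\<lambda>q. sint (\<mu>t q) (KU s))" if "s \<in> {a, b}" for s
    using that ab by (intro set_integrable_subset[OF KU_int]) auto
  have G: "sint (\<mu>t r) (U s) = sint (\<mu>t a) (U s) + (\<integral>q\<in>{a<..r}. sint (\<mu>t q) (KU s) \<partial>lborel)"
    if "s \<in> {a, b}" "r \<in> {a<..b}" for s r
    using that ab by (intro U_increment) auto
  note avg = set_integral_averaged_increment[where G="\<lambda>s r. sint (\<mu>t r) (U s)"
      and H="\<lambda>s r. sint (\<mu>t r) (KU s)", OF ab(2) H G]
  show "set_integrable lborel {a<..b} (local_average a b)"
    using avg(1) unfolding local_average_def[abs_def] by simp
  show "(\<integral>q\<in>{a<..b}. local_average a b q \<partial>lborel) = sint (\<mu>t b) (U b) - sint (\<mu>t a) (U a)"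
    using avg(2) ab unfolding local_average_def by simp
qed

lemma local_average_convex:
  assumes ab: "0 \<le> a" "a < b" "b \<le> T" and q: "0 \<le> q"
  defines "\<alpha> \<equiv> (q - a) / (b - a)"
  shows "local_average a b q = \<alpha> * sint (\<mu>t q) (KU b) + (1 - \<alpha>) * sint (\<mu>t q) (KU a)
    + sint (\<mu>t q) (\<lambda>x. (U b x - U a x) / (b - a))"
proof -
  have "sint (\<mu>t q) (\<lambda>x. (U b x - U a x) / (b - a)) = (sint (\<mu>t q) (U b) - sint (\<mu>t q) (U a)) / (b - a)"
    using ab by (simp add: sint_divide sint_diff[OF fin[OF q] U_bdd U_bdd])
  moreover have "1 - \<alpha> = (b - q) / (b - a)" using ab by (simp add: \<alpha>_def field_simps)
  ultimately show ?thesis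
    using ab by (simp add: local_average_def \<alpha>_def add_divide_distrib)
qed

lemma local_average_bound:
  assumes ab: "0 \<le> a" "a < b" "b \<le> T" and q: "q \<in> {a<..b}"
  shows "\<bar>local_average a b q\<bar> \<le> (BK + BUt) * tv (\<mu>t q)"
proof -
  define \<alpha> where "\<alpha> = (q - a) / (b - a)"
  have \<alpha>: "0 \<le> \<alpha>" "\<alpha> \<le> 1" using ab q by (auto simp: \<alpha>_def field_simps)
  have q0: "0 \<le> q" using ab q by auto
  have K: "\<bar>sint (\<mu>t q) (KU s)\<bar> \<le> BK * tv (\<mu>t q)" if "s \<in> {a, b}" for s
    using that ab KU_bounded_borel[of s] KU_bdd[of s] unfolding bounded_borel_def
    by (intro abs_sint_le_tv[OF fin[OF q0]]) auto
  have D: "\<bar>sint (\<mu>t q) (\<lambda>x. (U b x - U a x) / (b - a))\<bar> \<le> BUt * tv (\<mu>t q)"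
    using U_quotient_bounded_borel[OF ab] U_quotient_bound[OF ab] unfolding bounded_borel_def
    by (intro abs_sint_le_tv[OF fin[OF q0]]) auto
  have "\<bar>local_average a b q\<bar> \<le> \<alpha> * \<bar>sint (\<mu>t q) (KU b)\<bar> + (1 - \<alpha>) * \<bar>sint (\<mu>t q) (KU a)\<bar>
      + \<bar>sint (\<mu>t q) (\<lambda>x. (U b x - U a x) / (b - a))\<bar>"
    unfolding local_average_convex[OF ab q0, folded \<alpha>_def] using \<alpha>
    by (intro order_trans[OF abs_triangle_ineq] add_mono order_trans[OF abs_triangle_ineq])
      (simp_all add: abs_mult)
  also have "\<dots> \<le> \<alpha> * (BK * tv (\<mu>t q)) + (1 - \<alpha>) * (BK * tv (\<mu>t q)) + BUt * tv (\<mu>t q)"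
    using \<alpha> K D by (intro add_mono mult_left_mono) auto
  finally show ?thesis by (simp add: algebra_simps)
qed

lemma KU_tendsto:
  assumes "q \<in> {0..T}" "\<And>m. s m \<in> {0..T}" "s \<longlonglongrightarrow> q"
  shows "(\<lambda>m. sint (\<mu>t q) (KU (s m))) \<longlonglongrightarrow> sint (\<mu>t q) (KU q)"
proof (rule sint_tendsto[OF fin])
  show "KU (s m) \<in> borel_measurable borel" "\<bar>KU (s m) x\<bar> \<le> BK" for m x
    using KU_bounded_borel[OF assms(2)] KU_bdd[OF assms(2)] by (auto simp: bounded_borel_def)
  show "(\<lambda>m. KU (s m) x) \<longlonglongrightarrow> KU q x" for x
    using continuous_on_tendsto_compose[OF continuous_on_slice_fst[OF KU_cont] assms(3,1)] assms(2) by simp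
qed (use assms(1) in auto)

lemma local_average_tendsto:
  assumes q: "q \<in> {0<..T}"
    and cells: "\<And>m. 0 \<le> lo m \<and> lo m < q \<and> q \<le> hi m \<and> hi m \<le> T"
    and lo: "lo \<longlonglongrightarrow> q" and hi: "hi \<longlonglongrightarrow> q"
  shows "(\<lambda>m. local_average (lo m) (hi m) q) \<longlonglongrightarrow> sint (\<mu>t q) (\<lambda>x. Ut q x + KU q x)"
proof -
  have ab: "0 \<le> lo m" "lo m < hi m" "hi m \<le> T" for m using cells[of m] by auto
  have q0: "0 \<le> q" "q \<in> {0..T}" using q by auto
  have lh: "lo m \<in> {0..T}" "hi m \<in> {0..T}" for m using cells[of m] by auto
  define \<alpha> where "\<alpha> m = (q - lo m) / (hi m - lo m)" for m
  have \<alpha>: "0 \<le> \<alpha> m \<and> \<alpha> m \<le> 1" for m using cells[of m] by (auto simp: \<alpha>_def field_simps)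
  have K: "(\<lambda>m. \<alpha> m * sint (\<mu>t q) (KU (hi m)) + (1 - \<alpha> m) * sint (\<mu>t q) (KU (lo m)))
      \<longlonglongrightarrow> sint (\<mu>t q) (KU q)"
    using lh by (intro convex_combination_tendsto[OF \<alpha>] KU_tendsto[OF q0(2)] lo hi)
  have D: "(\<lambda>m. sint (\<mu>t q) (\<lambda>x. (U (hi m) x - U (lo m) x) / (hi m - lo m))) \<longlonglongrightarrow> sint (\<mu>t q) (Ut q)"
  proof (rule sint_tendsto[OF fin[OF q0(1)]])
    show "(\<lambda>x. (U (hi m) x - U (lo m) x) / (hi m - lo m)) \<in> borel_measurable borel"
      "\<bar>(U (hi m) x - U (lo m) x) / (hi m - lo m)\<bar> \<le> BUt" for m x
      using U_quotient_bounded_borel[OF ab] U_quotient_bound[OF ab] by (auto simp: bounded_borel_def)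
    show "(\<lambda>m. (U (hi m) x - U (lo m) x) / (hi m - lo m)) \<longlonglongrightarrow> Ut q x" for x
      using cells ab by (intro difference_quotient_tendsto[OF U_deriv continuous_on_slice_fst[OF Ut_cont] _ lo hi])
        (auto simp: less_imp_le)
  qed
  have "local_average (lo m) (hi m) q = (\<alpha> m * sint (\<mu>t q) (KU (hi m)) + (1 - \<alpha> m) * sint (\<mu>t q) (KU (lo m)))
      + sint (\<mu>t q) (\<lambda>x. (U (hi m) x - U (lo m) x) / (hi m - lo m))" for m
    unfolding \<alpha>_def by (rule local_average_convex[OF ab q0(1)])
  then show ?thesis
    using tendsto_add[OF K D] sint_add[OF fin[OF q0(1)] Ut_bounded_borel[OF q0(2)] KU_bounded_borel[OF q0(2)]]
    by (simp add: add.commute)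
qed

lemma pairing_at_0: "sint (\<mu>t 0) (U 0) = sint \<mu>0 (U 0)"
  using U_eq[of 0 0] T_nonneg by (simp add: set_integral_singleton_lborel)

lemma pairing_increment_eq_set_integral:
  assumes t: "t \<in> {0..T}"
  shows "set_integrable lborel {0..t} (\<lambda>s. sint (\<mu>t s) (\<lambda>x. Ut s x + KU s x))
    \<and> sint (\<mu>t t) (U t) - sint \<mu>0 (U 0) = (\<integral>s\<in>{0..t}. sint (\<mu>t s) (\<lambda>x. Ut s x + KU s x) \<partial>lborel)"
proof (cases "t = 0")
  case True
  then show ?thesis using pairing_at_0 by (simp add: set_integral_singleton_lborel)
next
  case False
  with t have t: "0 < t" "t \<le> T" by auto
  have int: "set_integrable lborel {a<..b} (local_average a b)"
    and eq: "(\<integral>q\<in>{a<..b}. local_average a b q \<partial>lborel) = sint (\<mu>t b) (U b) - sint (\<mu>t a) (U a)"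
    if "0 \<le> a" "a < b" "b \<le> t" for a b
    using that t local_average_integral[of a b] by auto
  have bound: "\<bar>local_average a b q\<bar> \<le> (BK + BUt) * tv (\<mu>t q)"
    if "0 \<le> a" "a < b" "b \<le> t" "q \<in> {a<..b}" for a b q
    using that t by (intro local_average_bound) auto
  have w: "set_integrable lborel {0..t} (\<lambda>q. (BK + BUt) * tv (\<mu>t q))"
    using t by (intro set_integrable_mult_right set_integrable_subset[OF tv_int]) auto
  have lim: "(\<lambda>m. local_average (lo m) (hi m) q) \<longlonglongrightarrow> sint (\<mu>t q) (\<lambda>x. Ut q x + KU q x)"
    if "q \<in> {0<..t}" "\<And>m. 0 \<le> lo m \<and> lo m < q \<and> q \<le> hi m \<and> hi m \<le> t" "lo \<longlonglongrightarrow> q" "hi \<longlonglongrightarrow> q"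
    for lo hi q
  proof (rule local_average_tendsto[OF _ _ that(3,4)])
    show "q \<in> {0<..T}" "0 \<le> lo m \<and> lo m < q \<and> q \<le> hi m \<and> hi m \<le> T" for m
      using that(1) that(2)[of m] t by auto
  qed
  have "set_integrable lborel {0..t} (\<lambda>s. sint (\<mu>t s) (\<lambda>x. Ut s x + KU s x))"
    and "sint (\<mu>t t) (U t) - sint (\<mu>t 0) (U 0)
      = (\<integral>s\<in>{0..t}. sint (\<mu>t s) (\<lambda>x. Ut s x + KU s x) \<partial>lborel)"
    by (rule increment_eq_set_integral_of_local_averages[OF t(1)]; fact int eq bound w lim)+
  with pairing_at_0 show ?thesis by simp
qed

lemma abs_cont_on_pairing: "abs_cont_on 0 T (\<lambda>t. sint (\<mu>t t) (U t))"
proof (rule abs_cont_on_indefinite_integral)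
  show "set_integrable lborel {0..T} (\<lambda>s. sint (\<mu>t s) (\<lambda>x. Ut s x + KU s x))"
    using pairing_increment_eq_set_integral[of T] T_nonneg by auto
  show "sint (\<mu>t x) (U x) = sint (\<mu>t 0) (U 0) + (\<integral>s\<in>{0..x}. sint (\<mu>t s) (\<lambda>x. Ut s x + KU s x) \<partial>lborel)"
    if "x \<in> {0..T}" for x
    using pairing_increment_eq_set_integral[OF that] pairing_at_0 by simp
qed

end

theorem lemma3p4:
  fixes \<pi> :: "real \<Rightarrow> 'a::{real_inner, complete_space, second_countable_topology} \<Rightarrow> 'a measure"
    and \<mu> :: "'a smeasure" and \<mu>t :: "real \<Rightarrow> 'a smeasure"
    and T :: real and u ut :: "real \<Rightarrow> 'a \<Rightarrow> real"
  assumes sg: "sc_markov_semigroup \<pi>"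
    and mu: "fin_smeasure \<mu>"
    and sol: "measure_eq_solution \<pi> \<mu> \<mu>t"
    and T: "T > 0"
    and u_Cb: "u \<in> CbT T"
    and u_DK: "\<forall>t\<in>{0..T}. u t \<in> DK \<pi>"
    and Ku_cont: "continuous_on ({0..T} \<times> UNIV) (\<lambda>(t,x). Kgen \<pi> (u t) x)"
    and Ku_bdd: "bounded ((\<lambda>(t,x). Kgen \<pi> (u t) x) ` ({0..T} \<times> UNIV))"
    and u_deriv: "\<forall>x. \<forall>t\<in>{0..T}. ((\<lambda>s. u s x) has_real_derivative ut t x) (at t within {0..T})"
    and ut_cont: "continuous_on ({0..T} \<times> UNIV) (\<lambda>(t,x). ut t x)"
    and ut_bdd: "bounded ((\<lambda>(t,x). ut t x) ` ({0..T} \<times> UNIV))"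
  shows "abs_cont_on 0 T (\<lambda>t. sint (\<mu>t t) (u t))
       \<and> (\<forall>t\<in>{0..T}.
            set_integrable lborel {0..t} (\<lambda>s. sint (\<mu>t s) (\<lambda>x. ut s x + Kgen \<pi> (u s) x))
          \<and> sint (\<mu>t t) (u t) - sint \<mu> (u 0)
              = (\<integral>s\<in>{0..t}. sint (\<mu>t s) (\<lambda>x. ut s x + Kgen \<pi> (u s) x) \<partial>lborel))"
proof -
  obtain BUt where BUt: "\<And>s x. s \<in> {0..T} \<Longrightarrow> \<bar>ut s x\<bar> \<le> BUt"
    using ut_bdd unfolding bounded_real by fastforce
  obtain BK where BK: "\<And>s x. s \<in> {0..T} \<Longrightarrow> \<bar>Kgen \<pi> (u s) x\<bar> \<le> BK"
    using Ku_bdd unfolding bounded_real by fastforce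
  interpret tested_measure_flow \<mu>t \<mu> T BUt BK u ut "\<lambda>s. Kgen \<pi> (u s)"
  proof
    show "0 \<le> T" using T by simp
    show "set_integrable lborel {0..T} (\<lambda>r. tv (\<mu>t r))"
      using sol T unfolding measure_eq_solution_def by blast
    fix s assume s: "s \<in> {0..T}"
    then show "set_integrable lborel {0..T} (\<lambda>r. sint (\<mu>t r) (Kgen \<pi> (u s)))"
      and "r \<in> {0..T} \<Longrightarrow> sint (\<mu>t r) (u s) - sint \<mu> (u s) = (\<integral>q\<in>{0..r}. sint (\<mu>t q) (Kgen \<pi> (u s)) \<partial>lborel)"
      for r
      using sol u_DK T unfolding measure_eq_solution_def by auto
    show "bounded_borel (u s)" using u_DK s by (intro Cb_bounded_borel) (auto simp: DK_def)
  qed (use sol BUt BK u_deriv ut_cont Ku_cont in \<open>auto simp: measure_eq_solution_def\<close>)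
  show ?thesis using abs_cont_on_pairing pairing_increment_eq_set_integral by blast
qed

end
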